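(* In a Gibbs-type feature model with parameters $\alpha<1$, $\theta>-\alpha$ and weights $(V_{n,k})$, for every $n\ge1$ and $k\ge0$: if $\alpha<0$, $$P(K_n=k)=V_{n,k}\Big\{\frac{(\theta+\alpha)_n-(\theta)_n}{\alpha}\Big\}^k;$$ if $\alpha\in[0,1)$, $$P(K_n=k)=V_{n,k}\big\{g_n(\theta,\alpha)\,(\theta+1)_{n-1}\big\}^k,\qquad g_n(\theta,\alpha)=\sum_{i=1}^n\frac{(\theta+\alpha)_{i-1}}{(\theta+1)_{i-1}}.$$
   Context: Notation: $(x)_m=\Gamma(x+m)/\Gamma(x)$ (Pochhammer symbol); $[n]=\{1,\dots,n\}$. Individuals $i=1,2,\dots$ each display a finite (possibly empty) set of features, identified by almost surely distinct labels. For the sample $\mathbf Z^{(n)}=(Z_1,\dots,Z_n)$ of the first $n$ individuals, $K_n$ is the number of distinct features displayed, labelled $X_1,\dots,X_{K_n}$ in order of appearance; $A_{i,\ell}\in\{0,1\}$ indicates whether individual $i$ displays $X_\ell$, and $m_\ell=\sum_{i=1}^nA_{i,\ell}\in[n]$. The ordered feature allocation is $F_n=(B_{n,1},\dots,B_{n,K_n})$, $B_{n,\ell}=\{i\in[n]:A_{i,\ell}=1\}$. The model admits an exchangeable feature probability function (EFPF) if there are symmetric functions $\pi_n:\bigcup_{k\ge0}[n]^k\to[0,1]$ with $P(F_n=f_n)=\pi_n(m_1,\dots,m_k)$ for every ordered feature allocation $f_n$ of $[n]$ (a sequence of $k$ nonempty subsets of $[n]$ with sizes $m_1,\dots,m_k$),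 all orderings of the same collection of sets being equally likely; the laws for different $n$ are consistent. The model is a Gibbs-type feature model with parameters $\alpha<1$, $\theta>-\alpha$ if $\pi_n(m_1,\dots,m_k)=V_{n,k}\prod_{\ell=1}^k(1-\alpha)_{m_\ell-1}(\theta+\alpha)_{n-m_\ell}$ for nonnegative weights $(V_{n,k})_{n\ge1,k\ge0}$ satisfying $V_{n,k}=\sum_{j\ge0}\frac{(k+j)!}{j!\,k!}\{(\theta+\alpha)_n\}^j(\theta+n)^kV_{n+1,k+j}$. *)

theory Defs
  imports "HOL-Probability.Probability_Mass_Function"
begin

text \<open>An ordered feature allocation of [n]: a finite sequence of nonempty subsets of {1..n}
  (blocks may coincide, since distinct features may be displayed by the same individuals).\<close>
definition ofa :: "nat \<Rightarrow> nat set list \<Rightarrow> bool" where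
  "ofa n f \<longleftrightarrow> (\<forall>B\<in>set f. B \<noteq> {} \<and> B \<subseteq> {1..n})"

definition restr :: "nat \<Rightarrow> nat set list \<Rightarrow> nat set list" where
  "restr n f = filter (\<lambda>B. B \<noteq> {}) (map (\<lambda>B. B \<inter> {1..n}) f)"

definition gibbs_efpf :: "real \<Rightarrow> real \<Rightarrow> (nat \<Rightarrow> nat \<Rightarrow> real) \<Rightarrow> nat \<Rightarrow> nat list \<Rightarrow> real" where
  "gibbs_efpf \<alpha> \<theta> V n ms = V n (length ms) *
     (\<Prod>m\<leftarrow>ms. pochhammer (1 - \<alpha>) (m - 1) * pochhammer (\<theta> + \<alpha>) (n - m))"

text \<open>F n is the law of the ordered feature allocation F_n of [n]; K_n = length F_n.\<close>
definition gibbs_feature_model ::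
  "real \<Rightarrow> real \<Rightarrow> (nat \<Rightarrow> nat \<Rightarrow> real) \<Rightarrow> (nat \<Rightarrow> nat set list pmf) \<Rightarrow> bool" where
  "gibbs_feature_model \<alpha> \<theta> V F \<longleftrightarrow>
     \<alpha> < 1 \<and> \<theta> > - \<alpha> \<and>
     (\<forall>n k. 0 \<le> V n k) \<and>
     (\<forall>n\<ge>1. \<forall>k. (\<lambda>j. real (fact (k + j)) / (real (fact j) * real (fact k)) *
                       (pochhammer (\<theta> + \<alpha>) n) ^ j * (\<theta> + real n) ^ k * V (n + 1) (k + j))
                   sums V n k) \<and>
     (\<forall>n\<ge>1. set_pmf (F n) \<subseteq> {f. ofa n f}) \<and>
     (\<forall>n\<ge>1. \<forall>f. ofa n f \<longrightarrow> pmf (F n) f = gibbs_efpf \<alpha> \<theta> V n (map card f)) \<and>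
     (\<forall>n\<ge>1. map_pmf (restr n) (F (Suc n)) = F n)"

definition g_fun :: "nat \<Rightarrow> real \<Rightarrow> real \<Rightarrow> real" where
  "g_fun n \<theta> \<alpha> = (\<Sum>i=1..n. pochhammer (\<theta> + \<alpha>) (i - 1) / pochhammer (\<theta> + 1) (i - 1))"

end

theory Submission
  imports Defs
begin

text \<open>Summing the EFPF over all ordered feature allocations with k blocks factorises, because
  each block ranges independently over the nonempty subsets of [n]: the probability is
  V(n,k) S(n)^k, where S(n) is the sum over block sizes m of (n choose m) (1-\<alpha>)_{m-1} (\<theta>+\<alpha>)_{n-m}.
  Pascal's rule gives S(n+1) = (\<theta>+n) S(n) + (\<theta>+\<alpha>)_n, and both closed forms follow from
  this recurrence by induction.\<close>

lemma sum_prod_list_lists_length: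
  fixes h :: "'a \<Rightarrow> 'b::comm_semiring_1"
  assumes "finite A"
  shows "(\<Sum>xs | set xs \<subseteq> A \<and> length xs = k. prod_list (map h xs)) = (\<Sum>x\<in>A. h x) ^ k"
proof (induction k)
  case 0
  have "{xs. set xs \<subseteq> A \<and> length xs = 0} = {[]}" by auto
  then show ?case by simp
next
  case (Suc k)
  let ?L = "{xs. set xs \<subseteq> A \<and> length xs = k}"
  have "(\<Sum>xs | set xs \<subseteq> A \<and> length xs = Suc k. prod_list (map h xs)) =
      (\<Sum>p \<in> ?L \<times> A. prod_list (map h ((\<lambda>(xs, x). x # xs) p)))"
    unfolding lists_length_Suc_eq by (subst sum.reindex) (auto simp: inj_split_Cons)
  also have "\<dots> = (\<Sum>xs\<in>?L. \<Sum>x\<in>A. h x * prod_list (map h xs))"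
    unfolding sum.cartesian_product by (simp add: case_prod_unfold)
  also have "\<dots> = (\<Sum>xs\<in>?L. prod_list (map h xs)) * (\<Sum>x\<in>A. h x)"
    by (simp add: sum_distrib_left sum_distrib_right mult.commute)
  finally show ?case
    using Suc by (simp add: mult.commute)
qed

lemma sum_nonempty_subsets_card:
  fixes f :: "nat \<Rightarrow> 'b::comm_semiring_1"
  assumes "finite A"
  shows "(\<Sum>B | B \<subseteq> A \<and> B \<noteq> {}. f (card B)) = (\<Sum>m=1..card A. of_nat (card A choose m) * f m)"
proof -
  let ?P = "{B. B \<subseteq> A \<and> B \<noteq> {}}"
  have "card ` ?P \<subseteq> {1..card A}"
    using assms by (auto simp: Suc_le_eq card_gt_0_iff card_mono) (metis finite_subset)
  then have "(\<Sum>B\<in>?P. f (card B)) = (\<Sum>m=1..card A. of_nat (card {B \<in> ?P. card B = m}) * f m)"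
    using assms by (intro sum_fun_comp) auto
  also have "\<dots> = (\<Sum>m=1..card A. of_nat (card A choose m) * f m)"
  proof (intro sum.cong refl)
    fix m assume "m \<in> {1..card A}"
    then have "{B \<in> ?P. card B = m} = {B. B \<subseteq> A \<and> card B = m}"
      by auto
    then show "of_nat (card {B \<in> ?P. card B = m}) * f m = of_nat (card A choose m) * f m"
      using assms by (simp add: n_subsets)
  qed
  finally show ?thesis .
qed

definition gibbs_block_sum :: "real \<Rightarrow> real \<Rightarrow> nat \<Rightarrow> real" where
  "gibbs_block_sum \<alpha> \<theta> n =
     (\<Sum>m=1..n. real (n choose m) * pochhammer (1 - \<alpha>) (m - 1) * pochhammer (\<theta> + \<alpha>) (n - m))"

lemma gibbs_block_sum_lessThan:
  "gibbs_block_sum \<alpha> \<theta> n =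
     (\<Sum>j<n. real (n choose Suc j) * pochhammer (1 - \<alpha>) j * pochhammer (\<theta> + \<alpha>) (n - Suc j))"
  unfolding gibbs_block_sum_def by (simp add: sum.atLeast1_atMost_eq)

lemma gibbs_block_sum_Suc:
  "gibbs_block_sum \<alpha> \<theta> (Suc n) = (\<theta> + real n) * gibbs_block_sum \<alpha> \<theta> n + pochhammer (\<theta> + \<alpha>) n"
proof -
  let ?c = "pochhammer (1 - \<alpha>)" and ?d = "pochhammer (\<theta> + \<alpha>)"
  have "gibbs_block_sum \<alpha> \<theta> (Suc n) =
      (\<Sum>j\<le>n. real (n choose j) * ?c j * ?d (n - j)) + (\<Sum>j\<le>n. real (n choose Suc j) * ?c j * ?d (n - j))"
    by (simp add: gibbs_block_sum_lessThan lessThan_Suc_atMost sum.distrib algebra_simps)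
  also have "(\<Sum>j\<le>n. real (n choose j) * ?c j * ?d (n - j)) =
      ?d n + (\<Sum>j<n. real (n choose Suc j) * (?c j * (1 - \<alpha> + real j)) * ?d (n - Suc j))"
    by (simp add: sum.atMost_shift pochhammer_Suc)
  also have "(\<Sum>j\<le>n. real (n choose Suc j) * ?c j * ?d (n - j)) =
      (\<Sum>j<n. real (n choose Suc j) * ?c j * (?d (n - Suc j) * (\<theta> + \<alpha> + real (n - Suc j))))"
  proof -
    have "\<And>j. j < n \<Longrightarrow> ?d (n - j) = ?d (n - Suc j) * (\<theta> + \<alpha> + real (n - Suc j))"
      by (metis Suc_diff_Suc pochhammer_Suc)
    then show ?thesis
      by (simp add: lessThan_Suc_atMost[symmetric])
  qed
  also have "?d n + (\<Sum>j<n. real (n choose Suc j) * (?c j * (1 - \<alpha> + real j)) * ?d (n - Suc j)) +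
      (\<Sum>j<n. real (n choose Suc j) * ?c j * (?d (n - Suc j) * (\<theta> + \<alpha> + real (n - Suc j)))) =
      (\<theta> + real n) * gibbs_block_sum \<alpha> \<theta> n + ?d n"
    by (simp add: gibbs_block_sum_lessThan sum_distrib_left sum.distrib[symmetric]
          algebra_simps)
  finally show ?thesis by simp
qed

lemma alpha_mult_gibbs_block_sum:
  "\<alpha> * gibbs_block_sum \<alpha> \<theta> n = pochhammer (\<theta> + \<alpha>) n - pochhammer \<theta> n"
proof (induction n)
  case 0
  then show ?case by (simp add: gibbs_block_sum_def)
next
  case (Suc n)
  have "\<alpha> * gibbs_block_sum \<alpha> \<theta> (Suc n) =
      (\<theta> + real n) * (\<alpha> * gibbs_block_sum \<alpha> \<theta> n) + \<alpha> * pochhammer (\<theta> + \<alpha>) n"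
    by (simp add: gibbs_block_sum_Suc algebra_simps)
  then show ?case
    by (simp add: Suc pochhammer_Suc algebra_simps)
qed

lemma gibbs_block_sum_eq_g_fun:
  assumes "\<theta> + 1 > 0" and "n \<ge> 1"
  shows "gibbs_block_sum \<alpha> \<theta> n = g_fun n \<theta> \<alpha> * pochhammer (\<theta> + 1) (n - 1)"
  using assms(2)
proof (induction n rule: nat_induct_at_least)
  case base
  then show ?case by (simp add: gibbs_block_sum_def g_fun_def)
next
  case (Suc n)
  have "pochhammer (\<theta> + 1) n \<noteq> 0"
    using assms(1) by (simp add: pochhammer_eq_0_iff)
  moreover have "pochhammer (\<theta> + 1) n = pochhammer (\<theta> + 1) (n - 1) * (\<theta> + real n)"
    using Suc(1) pochhammer_Suc[of "\<theta> + 1" "n - 1"] by (simp add: algebra_simps)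
  moreover have "g_fun (Suc n) \<theta> \<alpha> = g_fun n \<theta> \<alpha> + pochhammer (\<theta> + \<alpha>) n / pochhammer (\<theta> + 1) n"
    using Suc(1) by (simp add: g_fun_def)
  ultimately show ?case
    by (simp add: gibbs_block_sum_Suc Suc(2) field_simps)
qed

lemma measure_length_gibbs_efpf:
  assumes support: "set_pmf p \<subseteq> {f. ofa n f}"
    and efpf: "\<And>f. ofa n f \<Longrightarrow> pmf p f = gibbs_efpf \<alpha> \<theta> V n (map card f)"
  shows "measure_pmf.prob p {f. length f = k} = V n k * gibbs_block_sum \<alpha> \<theta> n ^ k"
proof -
  define w where "w m = pochhammer (1 - \<alpha>) (m - 1) * pochhammer (\<theta> + \<alpha>) (n - m)" for m
  define A where "A = {B. B \<subseteq> {1..n} \<and> B \<noteq> {}}"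
  have "finite A"
    unfolding A_def by (rule finite_subset[of _ "Pow {1..n}"]) auto
  let ?L = "{f. set f \<subseteq> A \<and> length f = k}"
  have L_eq: "?L = {f. ofa n f \<and> length f = k}"
    unfolding A_def ofa_def by auto
  have "measure_pmf.prob p {f. length f = k} = measure_pmf.prob p ?L"
    using support by (intro measure_eq_AE AE_pmfI) (auto simp: L_eq)
  also have "\<dots> = (\<Sum>f\<in>?L. V n k * prod_list (map (\<lambda>B. w (card B)) f))"
    unfolding measure_measure_pmf_finite[OF finite_lists_length_eq[OF \<open>finite A\<close>]]
    by (intro sum.cong) (auto simp: L_eq efpf gibbs_efpf_def w_def o_def)
  also have "\<dots> = V n k * (\<Sum>B\<in>A. w (card B)) ^ k"
    by (simp add: sum_distrib_left[symmetric] sum_prod_list_lists_length[OF \<open>finite A\<close>])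
  also have "(\<Sum>B\<in>A. w (card B)) = gibbs_block_sum \<alpha> \<theta> n"
    using sum_nonempty_subsets_card[of "{1..n}" w]
    by (simp add: A_def w_def gibbs_block_sum_def mult.assoc)
  finally show ?thesis .
qed

theorem theorem2:
  fixes \<alpha> \<theta> :: real and V :: "nat \<Rightarrow> nat \<Rightarrow> real" and F :: "nat \<Rightarrow> nat set list pmf"
    and n k :: nat
  assumes "gibbs_feature_model \<alpha> \<theta> V F" and "n \<ge> 1"
  shows "(\<alpha> < 0 \<longrightarrow> measure_pmf.prob (F n) {f. length f = k}
            = V n k * ((pochhammer (\<theta> + \<alpha>) n - pochhammer \<theta> n) / \<alpha>) ^ k)
       \<and> (0 \<le> \<alpha> \<longrightarrow> measure_pmf.prob (F n) {f. length f = k}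
            = V n k * (g_fun n \<theta> \<alpha> * pochhammer (\<theta> + 1) (n - 1)) ^ k)"
proof -
  have params: "\<alpha> < 1" "\<theta> > - \<alpha>"
    and support: "set_pmf (F n) \<subseteq> {f. ofa n f}"
    and efpf: "\<And>f. ofa n f \<Longrightarrow> pmf (F n) f = gibbs_efpf \<alpha> \<theta> V n (map card f)"
    using assms unfolding gibbs_feature_model_def by auto
  from support efpf
  have prob: "measure_pmf.prob (F n) {f. length f = k} = V n k * gibbs_block_sum \<alpha> \<theta> n ^ k"
    by (rule measure_length_gibbs_efpf)
  have "gibbs_block_sum \<alpha> \<theta> n = (pochhammer (\<theta> + \<alpha>) n - pochhammer \<theta> n) / \<alpha>" if "\<alpha> < 0"
    using that alpha_mult_gibbs_block_sum[of \<alpha> \<theta> n] by (simp add: field_simps)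
  moreover have "gibbs_block_sum \<alpha> \<theta> n = g_fun n \<theta> \<alpha> * pochhammer (\<theta> + 1) (n - 1)" if "0 \<le> \<alpha>"
    using that params \<open>n \<ge> 1\<close> by (intro gibbs_block_sum_eq_g_fun) auto
  ultimately show ?thesis
    by (simp add: prob)
qed

end
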